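(* In the setting below, the bi-orthogonal polynomials satisfy the recursion relations $$A\widehat p^{(1)}=z^aB\widehat p^{(1)},\qquad B^Th^{-1}p^{(2)}=z^bA^Th^{-1}p^{(2)} .$$
   Context: Let $a,b\geq1$ and let $\mu=(\mu_{ij})_{i,j\ge0}$ be a semi-infinite complex matrix with $\mu_{i+a,j+b}=\mu_{ij}$; set $\widehat\mu_{ij}=\mu_{i,j+b}$, and define bilinear forms on $\mathbb C[z]$ by $\langle z^i,z^j\rangle_\mu=\mu_{ij}$, $\langle z^i,z^j\rangle_{\widehat\mu}=\widehat\mu_{ij}$. Let $p^{(1)}_j,p^{(2)}_j,\widehat p^{(1)}_j,\widehat p^{(2)}_j$ ($j\ge0$) be monic polynomials of degree $j$ with $\langle p^{(1)}_i,p^{(2)}_j\rangle_\mu=\delta_{ij}h_i$, $\langle \widehat p^{(1)}_i,\widehat p^{(2)}_j\rangle_{\widehat\mu}=\delta_{ij}\widehat h_i$ (all $h_i,\widehat h_i\neq0$). Let $S_1,S_2$ be semi-infinite matrices with $p^{(1)}_i(z)=\sum_{k=0}^i(S_1)_{ik}z^k$, $p^{(2)}_i(z)=h_i\sum_{k=0}^i(S_2^{-1})_{ki}z^k$, and $\widehat S_1,\widehat S_2$ defined analogously from $\widehat p^{(1)},\widehat p^{(2)},\widehat h$. Here $\Lambda$ is the semi-infinite matrix $\Lambda_{ij}=\delta_{i+1,j}$ and $\Lambda^{-1}$ its transpose. Assume $S_1\Lambda^a\widehat S_1^{-1}=S_2\widehat S_2^{-1}=:A$ and $S_1\widehat S_1^{-1}=S_2\Lambda^{-b}\widehat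 S_2^{-1}=:B$. $p^{(i)}$, $\widehat p^{(i)}$ denote the column vectors with $j$-th entries $p^{(i)}_j$, $\widehat p^{(i)}_j$; $h=\mathrm{diag}(h_j)$; ${}^T$ is transpose. *)

theory Defs
  imports "HOL-Analysis.Analysis" "HOL-Computational_Algebra.Polynomial"
begin

type_synonym cmat = "nat \<Rightarrow> nat \<Rightarrow> complex"

text \<open>Matrix product; every product occurring in the statement has only finitely
  many nonzero terms in each entry, so the (unconditional) infinite sum is a finite sum.\<close>
definition mmult :: "cmat \<Rightarrow> cmat \<Rightarrow> cmat" where
  "mmult M N = (\<lambda>i j. infsum (\<lambda>k. M i k * N k j) UNIV)"

definition midentity :: cmat where
  "midentity = (\<lambda>i j. if i = j then 1 else 0)"

fun mpow :: "cmat \<Rightarrow> nat \<Rightarrow> cmat" where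
  "mpow M 0 = midentity"
| "mpow M (Suc n) = mmult (mpow M n) M"

definition mtranspose :: "cmat \<Rightarrow> cmat" where
  "mtranspose M = (\<lambda>i j. M j i)"

definition Lam :: cmat where
  "Lam = (\<lambda>i j. if j = i + 1 then 1 else 0)"

definition Lam_inv :: cmat where
  "Lam_inv = mtranspose Lam"

definition bilin :: "cmat \<Rightarrow> complex poly \<Rightarrow> complex poly \<Rightarrow> complex" where
  "bilin \<mu> p q = (\<Sum>i\<le>degree p. \<Sum>j\<le>degree q. coeff p i * coeff q j * \<mu> i j)"

definition monic_deg :: "complex poly \<Rightarrow> nat \<Rightarrow> bool" where
  "monic_deg p n \<longleftrightarrow> degree p = n \<and> lead_coeff p = 1"

end

theory Submission
  imports Defs
begin

text \<open>Let \<open>Z = (z^k)\<^sub>k\<close> be the column of powers of \<open>z\<close>. Then \<open>\<Lambda>^a Z = z^a Z\<close> and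
  \<open>\<widehat>S\<^sub>1 Z\<close> is the vector of values \<open>\<widehat>p\<^sub>j(z)\<close>, so
  \<open>A \<widehat>S\<^sub>1 Z = S\<^sub>1 \<Lambda>^a \<widehat>S\<^sub>1\<^sup>-\<^sup>1 \<widehat>S\<^sub>1 Z = z^a S\<^sub>1 Z = z^a B \<widehat>S\<^sub>1 Z\<close>. Dually, for the row of powers
  \<open>Z\<^sup>T\<close> one has \<open>Z\<^sup>T \<Lambda>^{-b} = z^b Z\<^sup>T\<close>, and \<open>Z\<^sup>T S\<^sub>2\<^sup>-\<^sup>1\<close> is the row of values \<open>p\<^sub>j(z)/h\<^sub>j\<close>.
  Since the semi-infinite matrix product is only associative under finiteness conditions,
  the point is that all matrices involved are triangular: the coefficient matrices by the
  degree bounds, their inverses because the diagonal is invertible.\<close>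

lemma infsum_eq_sum_superset:
  fixes f :: "nat \<Rightarrow> complex"
  assumes "finite F" "\<And>k. k \<notin> F \<Longrightarrow> f k = 0"
  shows "infsum f UNIV = sum f F"
proof -
  have "infsum f UNIV = infsum f F"
    by (rule infsum_cong_neutral) (use assms in auto)
  then show ?thesis using assms by simp
qed

lemma mmult_eq_sum:
  assumes "finite F" "\<And>k. k \<notin> F \<Longrightarrow> M i k * N k j = 0"
  shows "mmult M N i j = (\<Sum>k\<in>F. M i k * N k j)"
  unfolding mmult_def by (rule infsum_eq_sum_superset[OF assms])

lemma mtranspose_mmult: "mtranspose (mmult M N) = mmult (mtranspose N) (mtranspose M)"
  by (simp add: mtranspose_def mmult_def mult.commute fun_eq_iff)

lemma mtranspose_mtranspose [simp]: "mtranspose (mtranspose M) = M"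
  by (simp add: mtranspose_def)

lemma mmult_midentity_left [simp]: "mmult midentity N = N"
proof (intro ext)
  fix i j
  have "mmult midentity N i j = (\<Sum>k\<in>{i}. midentity i k * N k j)"
    by (rule mmult_eq_sum) (auto simp: midentity_def)
  then show "mmult midentity N i j = N i j" by (simp add: midentity_def)
qed

lemma mmult_midentity_right [simp]: "mmult M midentity = M"
proof (intro ext)
  fix i j
  have "mmult M midentity i j = (\<Sum>k\<in>{j}. M i k * midentity k j)"
    by (rule mmult_eq_sum) (auto simp: midentity_def)
  then show "mmult M midentity i j = M i j" by (simp add: midentity_def)
qed

lemma mmult_scale_right: "mmult M (\<lambda>i j. c * N i j) = (\<lambda>i j. c * mmult M N i j)"
  unfolding mmult_def by (intro ext) (simp add: mult.left_commute infsum_cmult_right')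

lemma mmult_scale_left: "mmult (\<lambda>i j. c * M i j) N = (\<lambda>i j. c * mmult M N i j)"
  unfolding mmult_def by (intro ext) (simp add: mult.assoc infsum_cmult_right')

definition row_finite :: "cmat \<Rightarrow> bool" where
  "row_finite M \<longleftrightarrow> (\<forall>i. finite {k. M i k \<noteq> 0})"

definition col_finite :: "cmat \<Rightarrow> bool" where
  "col_finite M \<longleftrightarrow> (\<forall>j. finite {k. M k j \<noteq> 0})"

lemma col_finite_iff_row_finite_mtranspose: "col_finite M \<longleftrightarrow> row_finite (mtranspose M)"
  by (simp add: col_finite_def row_finite_def mtranspose_def)

lemma mmult_eq_sum_row_support:
  assumes "row_finite M"
  shows "mmult M N i j = (\<Sum>k\<in>{k. M i k \<noteq> 0}. M i k * N k j)"
  by (rule mmult_eq_sum) (use assms in \<open>auto simp: row_finite_def\<close>)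

lemma row_finite_mmult:
  assumes "row_finite M" "row_finite N"
  shows "row_finite (mmult M N)"
  unfolding row_finite_def
proof
  fix i
  let ?U = "\<Union>k\<in>{k. M i k \<noteq> 0}. {m. N k m \<noteq> 0}"
  have "{m. mmult M N i m \<noteq> 0} \<subseteq> ?U"
  proof
    fix m assume "m \<in> {m. mmult M N i m \<noteq> 0}"
    then have "(\<Sum>k\<in>{k. M i k \<noteq> 0}. M i k * N k m) \<noteq> 0"
      using mmult_eq_sum_row_support[OF assms(1)] by simp
    then obtain k where "k \<in> {k. M i k \<noteq> 0}" "M i k * N k m \<noteq> 0" by (meson sum.neutral)
    then show "m \<in> ?U" by auto
  qed
  moreover have "finite ?U" using assms by (auto simp: row_finite_def)
  ultimately show "finite {m. mmult M N i m \<noteq> 0}" using finite_subset by blast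
qed

lemma col_finite_mmult:
  assumes "col_finite M" "col_finite N"
  shows "col_finite (mmult M N)"
  using row_finite_mmult[of "mtranspose N" "mtranspose M"] assms
  by (simp add: col_finite_iff_row_finite_mtranspose mtranspose_mmult)

lemma mmult_assoc_row_finite:
  assumes "row_finite M" "row_finite N"
  shows "mmult (mmult M N) P = mmult M (mmult N P)"
proof (intro ext)
  fix i j
  let ?K = "{k. M i k \<noteq> 0}"
  let ?U = "\<Union>k\<in>?K. {m. N k m \<noteq> 0}"
  have fU: "finite ?U" using assms by (auto simp: row_finite_def)
  have MN: "mmult M N i m = (\<Sum>k\<in>?K. M i k * N k m)" for m
    using mmult_eq_sum_row_support[OF assms(1)] .
  have "mmult (mmult M N) P i j = (\<Sum>m\<in>?U. mmult M N i m * P m j)"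
    by (rule mmult_eq_sum[OF fU]) (auto simp: MN intro!: sum.neutral)
  also have "\<dots> = (\<Sum>k\<in>?K. \<Sum>m\<in>?U. M i k * N k m * P m j)"
    by (simp add: MN sum_distrib_right sum.swap[of _ ?U])
  also have "\<dots> = (\<Sum>k\<in>?K. M i k * mmult N P k j)"
  proof (rule sum.cong[OF refl])
    fix k assume k: "k \<in> ?K"
    have "mmult N P k j = (\<Sum>m\<in>?U. N k m * P m j)"
      by (rule mmult_eq_sum[OF fU]) (use k in auto)
    then show "(\<Sum>m\<in>?U. M i k * N k m * P m j) = M i k * mmult N P k j"
      by (simp add: sum_distrib_left mult.assoc)
  qed
  also have "\<dots> = mmult M (mmult N P) i j"
    by (rule mmult_eq_sum_row_support[OF assms(1), symmetric])
  finally show "mmult (mmult M N) P i j = mmult M (mmult N P) i j" .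
qed

lemma mmult_assoc_col_finite:
  assumes "col_finite N" "col_finite P"
  shows "mmult (mmult M N) P = mmult M (mmult N P)"
proof -
  have "mmult (mmult M N) P
      = mtranspose (mmult (mtranspose P) (mmult (mtranspose N) (mtranspose M)))"
    by (simp add: mtranspose_mmult[symmetric])
  also have "\<dots> = mtranspose (mmult (mmult (mtranspose P) (mtranspose N)) (mtranspose M))"
    using assms by (simp add: col_finite_iff_row_finite_mtranspose mmult_assoc_row_finite)
  also have "\<dots> = mmult M (mmult N P)"
    by (simp add: mtranspose_mmult[symmetric])
  finally show ?thesis .
qed

definition lower_triangular :: "cmat \<Rightarrow> bool" where
  "lower_triangular M \<longleftrightarrow> (\<forall>i k. i < k \<longrightarrow> M i k = 0)"

definition upper_triangular :: "cmat \<Rightarrow> bool" where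
  "upper_triangular M \<longleftrightarrow> lower_triangular (mtranspose M)"

lemma upper_triangular_iff: "upper_triangular M \<longleftrightarrow> (\<forall>k j. j < k \<longrightarrow> M k j = 0)"
  by (auto simp: upper_triangular_def lower_triangular_def mtranspose_def)

lemma row_finite_lower_triangular:
  assumes "lower_triangular M"
  shows "row_finite M"
  unfolding row_finite_def
proof
  fix i
  have "{k. M i k \<noteq> 0} \<subseteq> {..i}"
    using assms by (auto simp: lower_triangular_def not_le[symmetric])
  then show "finite {k. M i k \<noteq> 0}" using finite_subset by blast
qed

lemma col_finite_upper_triangular: "upper_triangular M \<Longrightarrow> col_finite M"
  by (simp add: upper_triangular_def col_finite_iff_row_finite_mtranspose
      row_finite_lower_triangular)

lemma lower_triangular_right_inverse:
  assumes L: "lower_triangular L" and diag: "\<And>i. L i i \<noteq> 0"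
    and inv: "mmult L X = midentity"
  shows "lower_triangular X"
proof -
  have "X i j = 0" if "i < j" for i j
    using that
  proof (induction i rule: less_induct)
    case (less i)
    have "mmult L X i j = (\<Sum>k\<in>{..i}. L i k * X k j)"
      by (rule mmult_eq_sum) (use L in \<open>auto simp: lower_triangular_def\<close>)
    also have "\<dots> = L i i * X i j + (\<Sum>k\<in>{..<i}. L i k * X k j)"
      by (simp add: lessThan_Suc_atMost[symmetric])
    also have "(\<Sum>k\<in>{..<i}. L i k * X k j) = 0"
      using less by (auto intro!: sum.neutral)
    finally show "X i j = 0"
      using inv less.prems diag[of i] by (simp add: midentity_def)
  qed
  then show ?thesis by (simp add: lower_triangular_def)
qed

lemma upper_triangular_left_inverse:
  assumes "upper_triangular U" "\<And>j. U j j \<noteq> 0" "mmult X U = midentity"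
  shows "upper_triangular X"
proof -
  have "mmult (mtranspose U) (mtranspose X) = mtranspose (mmult X U)"
    by (simp add: mtranspose_mmult)
  also have "\<dots> = midentity"
    using assms(3) by (auto simp: mtranspose_def midentity_def fun_eq_iff)
  finally have "mmult (mtranspose U) (mtranspose X) = midentity" .
  then show ?thesis
    using lower_triangular_right_inverse[of "mtranspose U" "mtranspose X"] assms(1,2)
    by (simp add: upper_triangular_def mtranspose_def)
qed

lemma lower_triangular_coeffs:
  assumes "\<And>i. degree (p i) \<le> i"
  shows "lower_triangular (\<lambda>i k. coeff (p i) k)"
  using assms by (auto simp: lower_triangular_def intro: coeff_eq_0 le_less_trans)

lemma upper_triangular_coeffs_div:
  assumes "\<And>j. degree (p j) \<le> j"
  shows "upper_triangular (\<lambda>k j. coeff (p j) k / c j)"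
  using assms by (auto simp: upper_triangular_iff intro: coeff_eq_0 le_less_trans)

lemma mmult_coeffs_powers:
  "mmult (\<lambda>i k. coeff (p i) k) (\<lambda>k j. z ^ k) i j = poly (p i) z"
proof -
  have "mmult (\<lambda>i k. coeff (p i) k) (\<lambda>k j. z ^ k) i j = (\<Sum>k\<le>degree (p i). coeff (p i) k * z ^ k)"
    by (rule mmult_eq_sum) (auto simp: coeff_eq_0)
  then show ?thesis by (simp add: poly_altdef)
qed

lemma mmult_powers_coeffs_div:
  "mmult (\<lambda>i k. z ^ k) (\<lambda>k j. coeff (p j) k / c j) i j = poly (p j) z / c j"
proof -
  have "mmult (\<lambda>i k. z ^ k) (\<lambda>k j. coeff (p j) k / c j) i j
      = (\<Sum>k\<le>degree (p j). z ^ k * (coeff (p j) k / c j))"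
    by (rule mmult_eq_sum) (auto simp: coeff_eq_0)
  then show ?thesis by (simp add: poly_altdef sum_divide_distrib mult.commute)
qed

lemma row_finite_coeffs: "row_finite (\<lambda>i k. coeff (p i) k)"
  unfolding row_finite_def
  by (auto intro: finite_subset[of _ "{..degree (p _)}"] le_degree)

lemma col_finite_coeffs_div:
  assumes "\<And>j. degree (p j) \<le> j"
  shows "col_finite (\<lambda>k j. coeff (p j) k / c j)"
  by (rule col_finite_upper_triangular[OF upper_triangular_coeffs_div[OF assms]])

lemma row_finite_right_inverse_coeffs:
  assumes "\<And>i. monic_deg (p i) i" "mmult (\<lambda>i k. coeff (p i) k) X = midentity"
  shows "row_finite X"
proof (rule row_finite_lower_triangular, rule lower_triangular_right_inverse[OF _ _ assms(2)])
  show "lower_triangular (\<lambda>i k. coeff (p i) k)"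
    using assms(1) by (simp add: lower_triangular_coeffs monic_deg_def)
  show "coeff (p i) i \<noteq> 0" for i
    using assms(1)[of i] unfolding monic_deg_def by force
qed

lemma col_finite_left_inverse_coeffs_div:
  assumes "\<And>j. monic_deg (p j) j" "\<And>j. c j \<noteq> 0"
    and "mmult X (\<lambda>k j. coeff (p j) k / c j) = midentity"
  shows "col_finite X"
proof (rule col_finite_upper_triangular, rule upper_triangular_left_inverse[OF _ _ assms(3)])
  show "upper_triangular (\<lambda>k j. coeff (p j) k / c j)"
    using assms(1) by (simp add: upper_triangular_coeffs_div monic_deg_def)
  show "coeff (p j) j / c j \<noteq> 0" for j
    using assms(1)[of j] assms(2)[of j] unfolding monic_deg_def by force
qed

lemma mpow_Lam: "mpow Lam n = (\<lambda>i j. if j = i + n then 1 else 0)"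
proof (induction n)
  case 0
  then show ?case by (simp add: midentity_def fun_eq_iff)
next
  case (Suc n)
  show ?case
  proof (intro ext)
    fix i j
    have "mpow Lam (Suc n) i j = (\<Sum>k\<in>{i+n}. mpow Lam n i k * Lam k j)"
      by (simp only: mpow.simps) (rule mmult_eq_sum, auto simp: Suc)
    then show "mpow Lam (Suc n) i j = (if j = i + Suc n then 1 else 0)"
      by (simp add: Suc) (auto simp: Lam_def)
  qed
qed

lemma mpow_Lam_inv: "mpow Lam_inv n = (\<lambda>i j. if i = j + n then 1 else 0)"
proof (induction n)
  case 0
  then show ?case by (simp add: midentity_def fun_eq_iff)
next
  case (Suc n)
  show ?case
  proof (intro ext)
    fix i j
    have "mpow Lam_inv (Suc n) i j = (\<Sum>k\<in>{j+1}. mpow Lam_inv n i k * Lam_inv k j)"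
      by (simp only: mpow.simps)
        (rule mmult_eq_sum, auto simp: Suc Lam_inv_def mtranspose_def Lam_def)
    then show "mpow Lam_inv (Suc n) i j = (if i = j + Suc n then 1 else 0)"
      by (simp add: Suc) (auto simp: Lam_inv_def mtranspose_def Lam_def)
  qed
qed

lemma row_finite_mpow_Lam: "row_finite (mpow Lam n)"
  unfolding row_finite_def mpow_Lam
  by (auto intro: finite_subset[of _ "{_ + n}"])

lemma col_finite_mpow_Lam_inv: "col_finite (mpow Lam_inv n)"
  unfolding col_finite_def mpow_Lam_inv
  by (auto intro: finite_subset[of _ "{_ + n}"])

lemma mmult_mpow_Lam_powers: "mmult (mpow Lam n) (\<lambda>k j. z ^ k) = (\<lambda>i j. z ^ n * z ^ i)"
proof (intro ext)
  fix i j
  have "mmult (mpow Lam n) (\<lambda>k j. z ^ k) i j = (\<Sum>k\<in>{i+n}. mpow Lam n i k * z ^ k)"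
    by (rule mmult_eq_sum) (auto simp: mpow_Lam)
  then show "mmult (mpow Lam n) (\<lambda>k j. z ^ k) i j = z ^ n * z ^ i"
    by (simp add: mpow_Lam power_add mult.commute)
qed

lemma mmult_powers_mpow_Lam_inv: "mmult (\<lambda>i k. z ^ k) (mpow Lam_inv n) = (\<lambda>i j. z ^ n * z ^ j)"
proof (intro ext)
  fix i j
  have "mmult (\<lambda>i k. z ^ k) (mpow Lam_inv n) i j = (\<Sum>k\<in>{j+n}. z ^ k * mpow Lam_inv n k j)"
    by (rule mmult_eq_sum) (auto simp: mpow_Lam_inv)
  then show "mmult (\<lambda>i k. z ^ k) (mpow Lam_inv n) i j = z ^ n * z ^ j"
    by (simp add: mpow_Lam_inv power_add mult.commute)
qed

lemma eigenvector_transfer_row_finite: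
  assumes fin: "row_finite S" "row_finite L" "row_finite Y" "row_finite X"
    and inv: "mmult Y X = midentity"
    and eigen: "mmult L V = (\<lambda>i j. c * V i j)"
  shows "mmult (mmult (mmult S L) Y) (mmult X V) = (\<lambda>i j. c * mmult (mmult S Y) (mmult X V) i j)"
proof -
  have YXV: "mmult Y (mmult X V) = V"
    using mmult_assoc_row_finite[OF fin(3,4), of V] inv by simp
  have "mmult (mmult (mmult S L) Y) (mmult X V) = mmult (mmult S L) V"
    using fin by (simp add: mmult_assoc_row_finite row_finite_mmult YXV)
  also have "\<dots> = (\<lambda>i j. c * mmult S V i j)"
    using fin by (simp add: mmult_assoc_row_finite eigen mmult_scale_right)
  also have "mmult S V = mmult (mmult S Y) (mmult X V)"
    using fin by (simp add: mmult_assoc_row_finite YXV)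
  finally show ?thesis .
qed

lemma eigenvector_transfer_col_finite:
  assumes fin: "col_finite S" "col_finite L" "col_finite Y" "col_finite X"
    and inv: "mmult X Y = midentity"
    and eigen: "mmult W L = (\<lambda>i j. c * W i j)"
  shows "mmult (mmult W X) (mmult (mmult Y L) S) = (\<lambda>i j. c * mmult (mmult W X) (mmult Y S) i j)"
proof -
  have WXY: "mmult (mmult W X) Y = W"
    using mmult_assoc_col_finite[OF fin(4,3), of W] inv by simp
  have "mmult (mmult W X) (mmult (mmult Y L) S) = mmult (mmult W L) S"
    using fin by (simp add: mmult_assoc_col_finite[symmetric] col_finite_mmult WXY)
  also have "\<dots> = (\<lambda>i j. c * mmult W S i j)"
    by (simp add: eigen mmult_scale_left)
  also have "mmult W S = mmult (mmult W X) (mmult Y S)"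
    using fin by (simp add: mmult_assoc_col_finite[symmetric] WXY)
  finally show ?thesis .
qed

theorem corollary2p1:
  fixes a b :: nat
    and \<mu> :: cmat
    and p1 p2 hp1 hp2 :: "nat \<Rightarrow> complex poly"
    and h hh :: "nat \<Rightarrow> complex"
    and S1 S2 S2inv hS1 hS1inv hS2 hS2inv :: cmat
  assumes ab: "a \<ge> 1" "b \<ge> 1"
    and per: "\<And>i j. \<mu> (i + a) (j + b) = \<mu> i j"
    and monic: "\<And>j. monic_deg (p1 j) j" "\<And>j. monic_deg (p2 j) j"
               "\<And>j. monic_deg (hp1 j) j" "\<And>j. monic_deg (hp2 j) j"
    and orth: "\<And>i j. bilin \<mu> (p1 i) (p2 j) = (if i = j then h i else 0)"
    and horth: "\<And>i j. bilin (\<lambda>i j. \<mu> i (j + b)) (hp1 i) (hp2 j) = (if i = j then hh i else 0)"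
    and hnz: "\<And>i. h i \<noteq> 0" "\<And>i. hh i \<noteq> 0"
    and S1_coeffs: "\<And>i k. S1 i k = coeff (p1 i) k"
    and S2inv_coeffs: "\<And>k i. S2inv k i = coeff (p2 i) k / h i"
    and S2_inv: "mmult S2 S2inv = midentity" "mmult S2inv S2 = midentity"
    and hS1_coeffs: "\<And>i k. hS1 i k = coeff (hp1 i) k"
    and hS1_inv: "mmult hS1 hS1inv = midentity" "mmult hS1inv hS1 = midentity"
    and hS2inv_coeffs: "\<And>k i. hS2inv k i = coeff (hp2 i) k / hh i"
    and hS2_inv: "mmult hS2 hS2inv = midentity" "mmult hS2inv hS2 = midentity"
    and A_eq: "mmult (mmult S1 (mpow Lam a)) hS1inv = mmult S2 hS2inv"
    and B_eq: "mmult S1 hS1inv = mmult (mmult S2 (mpow Lam_inv b)) hS2inv"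
  defines "A \<equiv> mmult S2 hS2inv"
    and "B \<equiv> mmult S1 hS1inv"
  shows "(\<forall>i z. infsum (\<lambda>j. A i j * poly (hp1 j) z) UNIV
               = z ^ a * infsum (\<lambda>j. B i j * poly (hp1 j) z) UNIV)
       \<and> (\<forall>i z. infsum (\<lambda>j. B j i * (poly (p2 j) z / h j)) UNIV
               = z ^ b * infsum (\<lambda>j. A j i * (poly (p2 j) z / h j)) UNIV)"
proof -
  have deg: "degree (p2 j) = j" "degree (hp2 j) = j" for j
    using monic(2,4) by (simp_all add: monic_deg_def)
  have S1_def: "S1 = (\<lambda>i k. coeff (p1 i) k)" and hS1_def: "hS1 = (\<lambda>i k. coeff (hp1 i) k)"
    and S2inv_def: "S2inv = (\<lambda>k i. coeff (p2 i) k / h i)"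
    and hS2inv_def: "hS2inv = (\<lambda>k i. coeff (hp2 i) k / hh i)"
    by (simp_all add: fun_eq_iff S1_coeffs hS1_coeffs S2inv_coeffs hS2inv_coeffs)
  have row_fin: "row_finite S1" "row_finite hS1" "row_finite hS1inv"
    using row_finite_right_inverse_coeffs[OF monic(3)] hS1_inv(1)
    by (simp_all add: S1_def hS1_def row_finite_coeffs)
  have col_fin: "col_finite S2" "col_finite S2inv" "col_finite hS2inv"
    using col_finite_left_inverse_coeffs_div[OF monic(2) hnz(1)] S2_inv(1)
    by (simp_all add: S2inv_def hS2inv_def col_finite_coeffs_div deg)
  have "mmult A (mmult hS1 (\<lambda>k j. z ^ k)) = (\<lambda>i j. z ^ a * mmult B (mmult hS1 (\<lambda>k j. z ^ k)) i j)"
    for z :: complex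
    unfolding A_def B_def A_eq[symmetric]
    by (rule eigenvector_transfer_row_finite[OF row_fin(1) row_finite_mpow_Lam row_fin(3,2)
          hS1_inv(2) mmult_mpow_Lam_powers])
  moreover have "mmult (mmult (\<lambda>i k. z ^ k) S2inv) B
      = (\<lambda>i j. z ^ b * mmult (mmult (\<lambda>i k. z ^ k) S2inv) A i j)" for z :: complex
    unfolding A_def B_def B_eq
    by (rule eigenvector_transfer_col_finite[OF col_fin(3) col_finite_mpow_Lam_inv col_fin(1,2)
          S2_inv(2) mmult_powers_mpow_Lam_inv])
  ultimately show ?thesis
    unfolding hS1_def S2inv_def
    by (simp add: mmult_def[of A] mmult_def[of B] mmult_def[of _ A] mmult_def[of _ B]
        mmult_coeffs_powers mmult_powers_coeffs_div fun_eq_iff mult.commute)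
qed

end
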